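(* Let $p$ be an odd prime, $\ell\geq1$, $k\geq1$. Then $|\mathcal{C}_{k+1}((\mathbb{Z}/p^\ell\mathbb{Z})^2)|\approx (p^\ell)^{2k-1}$. More precisely, the good $(k+1)$-point configurations in $(\mathbb{Z}/p^\ell\mathbb{Z})^2$ determine $\approx(p^\ell)^{2k-1}$ equivalence classes, and the bad configurations determine $o((p^\ell)^{2k-1})$ equivalence classes.
   Context: For $R=\mathbb{Z}/p^\ell\mathbb{Z}$ and $x=(x_1,x_2),y=(y_1,y_2)\in R^2$, write $y^\perp=(y_2,-y_1)$, so $x\cdot y^\perp=x_1y_2-x_2y_1$. A $(k+1)$-point configuration is $x=(x^1,\dots,x^{k+1})\in(R^2)^{k+1}$; it is good if $x^i\cdot x^{j\perp}$ is a unit for some $i,j$, and bad otherwise. Two configurations $x,y$ are equivalent iff $x^i\cdot x^{j\perp}=y^i\cdot y^{j\perp}$ for all pairs $i,j$; $\mathcal{C}_{k+1}(R^2)$ is the set of equivalence classes (and goodness/badness is constant on classes). $X\approx Y$ means $C^{-1}Y\leq X\leq CY$ with $C$ independent of $p$ and $\ell$ (possibly depending on $k$); $o(Y)$ denotes a quantity whose ratio to $Y$ tends to $0$ as $p\to\infty$. *)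

theory Defs
  imports "HOL-Number_Theory.Number_Theory"
begin

text \<open>Elements of Z/mZ are represented by integers in {0..<m}; points of R^2 by pairs.
  A (k+1)-point configuration is a function from indices {0..k} to points,
  extended by (0,0) outside {0..k} so that configurations are uniquely represented.\<close>

definition residues_set :: "nat \<Rightarrow> int set" where
  "residues_set m = {0..<int m}"

definition configs :: "nat \<Rightarrow> nat \<Rightarrow> (nat \<Rightarrow> int \<times> int) set" where
  "configs m k = {x. (\<forall>i\<le>k. fst (x i) \<in> residues_set m \<and> snd (x i) \<in> residues_set m)
                      \<and> (\<forall>i>k. x i = (0, 0))}"

definition perp_dot :: "nat \<Rightarrow> int \<times> int \<Rightarrow> int \<times> int \<Rightarrow> int" where
  "perp_dot m x y = (fst x * snd y - snd x * fst y) mod int m"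

definition is_unit_mod :: "nat \<Rightarrow> int \<Rightarrow> bool" where
  "is_unit_mod m a \<longleftrightarrow> (\<exists>b. [a * b = 1] (mod int m))"

definition good_config :: "nat \<Rightarrow> nat \<Rightarrow> (nat \<Rightarrow> int \<times> int) \<Rightarrow> bool" where
  "good_config m k x \<longleftrightarrow> (\<exists>i\<le>k. \<exists>j\<le>k. is_unit_mod m (perp_dot m (x i) (x j)))"

definition config_equiv :: "nat \<Rightarrow> nat \<Rightarrow> ((nat \<Rightarrow> int \<times> int) \<times> (nat \<Rightarrow> int \<times> int)) set" where
  "config_equiv m k = {(x, y). x \<in> configs m k \<and> y \<in> configs m k \<and>
      (\<forall>i\<le>k. \<forall>j\<le>k. perp_dot m (x i) (x j) = perp_dot m (y i) (y j))}"

definition config_classes :: "nat \<Rightarrow> nat \<Rightarrow> (nat \<Rightarrow> int \<times> int) set set" where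
  "config_classes m k = configs m k // config_equiv m k"

definition good_classes :: "nat \<Rightarrow> nat \<Rightarrow> (nat \<Rightarrow> int \<times> int) set set" where
  "good_classes m k = {c \<in> config_classes m k. \<forall>x\<in>c. good_config m k x}"

definition bad_classes :: "nat \<Rightarrow> nat \<Rightarrow> (nat \<Rightarrow> int \<times> int) set set" where
  "bad_classes m k = {c \<in> config_classes m k. \<forall>x\<in>c. \<not> good_config m k x}"

end

theory Submission
  imports Defs
begin

text \<open>
  A class is determined by the matrix D of the values x^i . x^j-perp mod p^l. Let p^v be the
  largest power of p dividing every entry of D and D_ab an entry not divisible by p^(v+1).
  Divided by p^(2v), the Pluecker relation D_ab D_ij = D_ai D_bj - D_aj D_bi holds modulo
  p^(l-v), where D_ab/p^v is a unit; so D is determined by the rows a and b of D/p^v, that is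
  by 2k-1 residues modulo p^(l-v). Summing the geometric series over v gives O((p^l)^(2k-1))
  classes, and only O((p^l)^(2k-1)/p^(2k-1)) bad ones, since v >= 1 for bad configurations.
  Conversely the configurations (1,0), (0,u), (a_i,b_i) with u a unit have pairwise distinct
  matrices, which gives phi(p^l) (p^l)^(2k-2) >= (p^l)^(2k-1)/2 good classes.
\<close>

definition det2 :: "int \<times> int \<Rightarrow> int \<times> int \<Rightarrow> int" where
  "det2 x y = fst x * snd y - snd x * fst y"

definition perp_gram :: "nat \<Rightarrow> nat \<Rightarrow> (nat \<Rightarrow> int \<times> int) \<Rightarrow> nat \<Rightarrow> nat \<Rightarrow> int" where
  "perp_gram m k x i j = (if i \<le> k \<and> j \<le> k then perp_dot m (x i) (x j) else 0)"

lemma det2_plucker: "det2 A B * det2 C D = det2 A C * det2 B D - det2 A D * det2 B C"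
  unfolding det2_def by (simp add: algebra_simps)

lemma perp_gram_eq_iff:
  "perp_gram m k x = perp_gram m k y \<longleftrightarrow>
     (\<forall>i\<le>k. \<forall>j\<le>k. perp_dot m (x i) (x j) = perp_dot m (y i) (y j))"
  unfolding perp_gram_def by (auto simp: fun_eq_iff)

lemma perp_gram_outside: "\<not> (i \<le> k \<and> j \<le> k) \<Longrightarrow> perp_gram m k x i j = 0"
  by (auto simp: perp_gram_def)

lemma perp_gram_diag: "perp_gram m k x i i = 0"
  by (simp add: perp_gram_def perp_dot_def)

lemma perp_gram_swap: "perp_gram m k x j i = - perp_gram m k x i j mod int m"
  by (simp add: perp_gram_def perp_dot_def mod_minus_eq algebra_simps)

lemma perp_gram_bounds: "m > 0 \<Longrightarrow> 0 \<le> perp_gram m k x i j \<and> perp_gram m k x i j < int m"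
  by (simp add: perp_gram_def perp_dot_def)

lemma perp_gram_cong_det2:
  "i \<le> k \<Longrightarrow> j \<le> k \<Longrightarrow> [perp_gram m k x i j = det2 (x i) (x j)] (mod int m)"
  by (simp add: perp_gram_def perp_dot_def det2_def cong_def)

lemma good_config_iff_perp_gram:
  "good_config m k x \<longleftrightarrow> (\<exists>i\<le>k. \<exists>j\<le>k. is_unit_mod m (perp_gram m k x i j))"
  by (auto simp: good_config_def perp_gram_def)

lemma finite_configs: "finite (configs m k)"
proof -
  have "configs m k = {x. \<forall>i. (i \<in> {..k} \<longrightarrow> x i \<in> residues_set m \<times> residues_set m)
                          \<and> (i \<notin> {..k} \<longrightarrow> x i = (0, 0))}"
    unfolding configs_def by (rule Collect_cong) (auto simp: mem_Times_iff not_le)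
  then show ?thesis
    by (simp only:) (rule finite_set_of_finite_funs, simp_all add: residues_set_def)
qed

lemma card_classes_eq_card_perp_grams:
  assumes invariant: "\<And>x y. x \<in> configs m k \<Longrightarrow> y \<in> configs m k \<Longrightarrow>
                        perp_gram m k x = perp_gram m k y \<Longrightarrow> P x \<Longrightarrow> P y"
  shows "card {c \<in> config_classes m k. \<forall>x\<in>c. P x} = card (perp_gram m k ` {x \<in> configs m k. P x})"
proof -
  let ?S = "configs m k" and ?g = "perp_gram m k"
  define fibre where "fibre D = {x \<in> ?S. ?g x = D}" for D
  have class_eq: "config_equiv m k `` {x} = fibre (?g x)" if "x \<in> ?S" for x
    using that by (auto simp: config_equiv_def fibre_def perp_gram_eq_iff)
  have classes_eq: "{c \<in> config_classes m k. \<forall>x\<in>c. P x} = fibre ` ?g ` {x \<in> ?S. P x}"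
  proof (intro Set.set_eqI iffI)
    fix c assume "c \<in> {c \<in> config_classes m k. \<forall>x\<in>c. P x}"
    then obtain x where "x \<in> ?S" "c = fibre (?g x)" "\<forall>y\<in>c. P y"
      by (auto simp: config_classes_def quotient_def class_eq)
    then show "c \<in> fibre ` ?g ` {x \<in> ?S. P x}"
      by (auto simp: fibre_def)
  next
    fix c assume "c \<in> fibre ` ?g ` {x \<in> ?S. P x}"
    then obtain x where x: "x \<in> ?S" "P x" "c = fibre (?g x)"
      by auto
    then have "\<forall>y\<in>c. P y"
      using invariant by (auto simp: fibre_def)
    moreover have "c \<in> config_classes m k"
      using x class_eq by (auto simp: config_classes_def quotient_def)
    ultimately show "c \<in> {c \<in> config_classes m k. \<forall>x\<in>c. P x}"
      by blast
  qed
  have "inj_on fibre (?g ` {x \<in> ?S. P x})"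
    by (rule inj_onI) (auto simp: fibre_def set_eq_iff)
  then show ?thesis
    unfolding classes_eq by (rule card_image)
qed

lemma det2_plucker_cong:
  fixes V W :: int and e :: "'a \<Rightarrow> 'a \<Rightarrow> int"
  assumes "V \<noteq> 0"
    and "\<And>s t. s \<in> {a, b, i, j} \<Longrightarrow> t \<in> {a, b, i, j} \<Longrightarrow>
           [det2 (x s) (x t) = V * e s t] (mod V * W)"
  shows "[e a b * e i j = e a i * e b j - e a j * e b i] (mod W)"
proof -
  define f where "f s t = (det2 (x s) (x t) - V * e s t) div (V * W)" for s t
  define E where "E s t = e s t + W * f s t" for s t
  have lift: "det2 (x s) (x t) = V * E s t" if "s \<in> {a, b, i, j}" "t \<in> {a, b, i, j}" for s t
  proof -
    have "V * W dvd det2 (x s) (x t) - V * e s t"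
      using assms(2)[OF that] by (simp add: cong_iff_dvd_diff)
    then have "V * W * f s t = det2 (x s) (x t) - V * e s t"
      unfolding f_def by simp
    then show ?thesis
      by (simp add: E_def algebra_simps)
  qed
  have "V * V * (E a b * E i j) = V * V * (E a i * E b j - E a j * E b i)"
    using det2_plucker[of "x a" "x b" "x i" "x j"] by (simp add: lift algebra_simps)
  then have E_plucker: "E a b * E i j = E a i * E b j - E a j * E b i"
    using \<open>V \<noteq> 0\<close> by simp
  have E_cong: "[E s t = e s t] (mod W)" for s t
    by (simp add: E_def cong_iff_dvd_diff)
  have "[e a b * e i j = E a b * E i j] (mod W)"
    by (rule cong_mult; rule cong_sym, rule E_cong)
  also have "E a b * E i j = E a i * E b j - E a j * E b i"
    by (rule E_plucker)
  also have "[\<dots> = e a i * e b j - e a j * e b i] (mod W)"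
    by (rule cong_diff; rule cong_mult; rule E_cong)
  finally show ?thesis .
qed

definition stratum :: "nat \<Rightarrow> nat \<Rightarrow> nat \<Rightarrow> nat \<Rightarrow> nat \<Rightarrow> nat \<Rightarrow> (nat \<Rightarrow> nat \<Rightarrow> int) set" where
  "stratum p l k v a b = {D \<in> perp_gram (p ^ l) k ` configs (p ^ l) k.
     (\<forall>i j. int p ^ v dvd D i j) \<and> \<not> int p ^ Suc v dvd D a b}"

lemma stratum_plucker_cong:
  assumes "p > 0" "v \<le> l" "D \<in> stratum p l k v a b" "a \<le> k" "b \<le> k" "i \<le> k" "j \<le> k"
  shows "[D a b div int p ^ v * (D i j div int p ^ v)
          = D a i div int p ^ v * (D b j div int p ^ v) - D a j div int p ^ v * (D b i div int p ^ v)]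
         (mod int p ^ (l - v))"
proof -
  obtain x where D: "D = perp_gram (p ^ l) k x" and dvd: "\<And>s t. int p ^ v dvd D s t"
    using assms(3) by (auto simp: stratum_def)
  have modulus: "int p ^ v * int p ^ (l - v) = int p ^ l"
    using \<open>v \<le> l\<close> by (simp flip: power_add)
  show ?thesis
  proof (rule det2_plucker_cong)
    show "int p ^ v \<noteq> 0"
      using \<open>p > 0\<close> by simp
    fix s t assume "s \<in> {a, b, i, j}" "t \<in> {a, b, i, j}"
    then have "[D s t = det2 (x s) (x t)] (mod int (p ^ l))"
      unfolding D using assms(4-7) by (intro perp_gram_cong_det2) auto
    then show "[det2 (x s) (x t) = int p ^ v * (D s t div int p ^ v)] (mod int p ^ v * int p ^ (l - v))"
      using dvd[of s t] by (simp add: modulus cong_sym)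
  qed
qed

lemma stratum_pivot_coprime:
  assumes p: "prime p" and D: "D \<in> stratum p l k v a b"
  shows "coprime (D a b div int p ^ v) (int p ^ w)"
proof -
  have dvd: "int p ^ v dvd D a b" and not_dvd: "\<not> int p ^ v * int p dvd D a b"
    using D unfolding stratum_def power_Suc2 by blast+
  have "\<not> int p dvd D a b div int p ^ v"
  proof
    assume "int p dvd D a b div int p ^ v"
    then have "int p ^ v * int p dvd int p ^ v * (D a b div int p ^ v)"
      by (rule mult_dvd_mono[OF dvd_refl])
    with dvd not_dvd show False
      by simp
  qed
  then show ?thesis
    using p by (simp add: prime_imp_coprime coprime_commute)
qed

text \<open>Both matrices satisfy the reduced Pluecker relation with the same pivot D_ab/p^v, a unit
  modulo p^(l-v); cancelling it recovers D_ij/p^v modulo p^(l-v), hence D_ij modulo p^l.\<close>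

lemma stratum_eqI:
  assumes p: "prime p" and "v \<le> l" "a \<le> k" "b \<le> k"
    and D: "D \<in> stratum p l k v a b" and D': "D' \<in> stratum p l k v a b"
    and rows: "\<And>i. D a i = D' a i" "\<And>i. D b i = D' b i"
  shows "D = D'"
proof (intro ext)
  fix i j
  let ?P = "int p ^ v" and ?W = "int p ^ (l - v)"
  obtain x x' where x: "D = perp_gram (p ^ l) k x" and x': "D' = perp_gram (p ^ l) k x'"
    using D D' by (auto simp: stratum_def)
  show "D i j = D' i j"
  proof (cases "i \<le> k \<and> j \<le> k")
    case False
    then show ?thesis
      by (simp add: x x' perp_gram_outside)
  next
    case True
    have "p > 0"
      using p prime_gt_0_nat by blast
    have "[D' a b div ?P * (D i j div ?P)
           = D' a i div ?P * (D' b j div ?P) - D' a j div ?P * (D' b i div ?P)] (mod ?W)"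
      using stratum_plucker_cong[OF \<open>p > 0\<close> \<open>v \<le> l\<close> D \<open>a \<le> k\<close> \<open>b \<le> k\<close>, of i j] True
      by (simp only: rows)
    moreover have "[D' a b div ?P * (D' i j div ?P)
           = D' a i div ?P * (D' b j div ?P) - D' a j div ?P * (D' b i div ?P)] (mod ?W)"
      using stratum_plucker_cong[OF \<open>p > 0\<close> \<open>v \<le> l\<close> D' \<open>a \<le> k\<close> \<open>b \<le> k\<close>, of i j] True
      by blast
    ultimately have "[D a b div ?P * (D i j div ?P) = D a b div ?P * (D' i j div ?P)] (mod ?W)"
      unfolding rows by (rule cong_trans[OF _ cong_sym])
    moreover have "coprime (D a b div ?P) ?W"
      by (rule stratum_pivot_coprime[OF p D])
    ultimately have "[D i j div ?P = D' i j div ?P] (mod ?W)"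
      by (simp add: cong_mult_lcancel)
    then have "[?P * (D i j div ?P) = ?P * (D' i j div ?P)] (mod ?P * ?W)"
      by (rule cong_cmult_leftI)
    moreover have "?P dvd D i j" "?P dvd D' i j"
      using D D' unfolding stratum_def by blast+
    moreover have "?P * ?W = int (p ^ l)"
      using \<open>v \<le> l\<close> by (simp flip: power_add)
    ultimately have "[D i j = D' i j] (mod int (p ^ l))"
      by simp
    moreover have "p ^ l > 0"
      using \<open>p > 0\<close> by simp
    ultimately show ?thesis
      unfolding x x' by (meson cong_less_imp_eq_int perp_gram_bounds)
  qed
qed

lemma zdiv_in_atLeastLessThan:
  fixes d c w :: int
  assumes "c > 0" "c dvd d" "0 \<le> d" "d < c * w"
  shows "d div c \<in> {0..<w}"
  using assms by (auto simp: pos_imp_zdiv_nonneg_iff elim!: dvdE)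

lemma stratum_entry_div_range:
  assumes "p > 0" "v \<le> l" "D \<in> stratum p l k v a b"
  shows "D s t div int p ^ v \<in> {0..<int p ^ (l - v)}"
proof (rule zdiv_in_atLeastLessThan)
  obtain x where x: "D = perp_gram (p ^ l) k x"
    using \<open>D \<in> stratum p l k v a b\<close> unfolding stratum_def by blast
  have "int p ^ l = int p ^ v * int p ^ (l - v)"
    using \<open>v \<le> l\<close> by (simp flip: power_add)
  then show "0 \<le> D s t" "D s t < int p ^ v * int p ^ (l - v)"
    using perp_gram_bounds[of "p ^ l" k x s t] \<open>p > 0\<close> by (simp_all add: x)
  show "int p ^ v dvd D s t"
    using \<open>D \<in> stratum p l k v a b\<close> unfolding stratum_def by blast
qed (use \<open>p > 0\<close> in simp)

lemma stratum_eq_if_reduced_rows_eq: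
  assumes p: "prime p" and "v \<le> l" "a \<le> k" "b \<le> k" "a \<noteq> b"
    and D: "D \<in> stratum p l k v a b" and D': "D' \<in> stratum p l k v a b"
    and quot_a: "\<And>i. i \<in> {..k} - {a} \<Longrightarrow> D a i div int p ^ v = D' a i div int p ^ v"
    and quot_b: "\<And>i. i \<in> {..k} - {a, b} \<Longrightarrow> D b i div int p ^ v = D' b i div int p ^ v"
  shows "D = D'"
proof -
  have entry_eq: "D s t = D' s t" if "D s t div int p ^ v = D' s t div int p ^ v" for s t
    using that D D' unfolding stratum_def by (blast intro: dvd_div_eq_cancel)
  obtain x x' where x: "D = perp_gram (p ^ l) k x" and x': "D' = perp_gram (p ^ l) k x'"
    using D D' unfolding stratum_def by blast
  have row_a: "D a i = D' a i" for i
  proof (cases "i \<in> {..k} - {a}")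
    case False
    then have "i = a \<or> \<not> i \<le> k"
      by auto
    then show ?thesis
      by (auto simp: x x' perp_gram_outside perp_gram_diag)
  qed (use quot_a entry_eq in blast)
  have row_b: "D b j = D' b j" for j
  proof (cases "j \<in> {..k} - {a, b}")
    case False
    then consider "j = a" | "j = b" | "\<not> j \<le> k"
      by auto
    then show ?thesis
    proof cases
      case 1
      then show ?thesis
        using row_a[of b] perp_gram_swap[of "p ^ l" k _ b a] by (simp add: x x')
    qed (auto simp: x x' perp_gram_outside perp_gram_diag)
  qed (use quot_b entry_eq in blast)
  show ?thesis
    using stratum_eqI[OF p \<open>v \<le> l\<close> \<open>a \<le> k\<close> \<open>b \<le> k\<close> D D'] row_a row_b by blast
qed

lemma card_stratum_le:
  assumes p: "prime p" and "v \<le> l" "a \<le> k" "b \<le> k"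
  shows "card (stratum p l k v a b) \<le> (p ^ (l - v)) ^ (2 * k - 1)"
proof (cases "a = b")
  case True
  then have "stratum p l k v a b = {}"
    by (auto simp: stratum_def perp_gram_diag)
  then show ?thesis
    by simp
next
  case False
  let ?P = "int p ^ v" and ?W = "int p ^ (l - v)" and ?S = "stratum p l k v a b"
  define Ia where "Ia = {..k} - {a}"
  define Ib where "Ib = {..k} - {a, b}"
  define code where "code D = (restrict (\<lambda>i. D a i div ?P) Ia, restrict (\<lambda>i. D b i div ?P) Ib)"
    for D :: "nat \<Rightarrow> nat \<Rightarrow> int"
  define box where "box = (Ia \<rightarrow>\<^sub>E {0..<?W}) \<times> (Ib \<rightarrow>\<^sub>E {0..<?W})"
  have "p > 0"
    using p prime_gt_0_nat by blast
  have "code ` ?S \<subseteq> box"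
    using stratum_entry_div_range[OF \<open>p > 0\<close> \<open>v \<le> l\<close>] by (auto simp: code_def box_def)
  moreover have "inj_on code ?S"
  proof (rule inj_onI)
    fix D D' assume D: "D \<in> ?S" and D': "D' \<in> ?S" and "code D = code D'"
    then have quot_a: "restrict (\<lambda>i. D a i div ?P) Ia = restrict (\<lambda>i. D' a i div ?P) Ia"
      and quot_b: "restrict (\<lambda>i. D b i div ?P) Ib = restrict (\<lambda>i. D' b i div ?P) Ib"
      by (simp_all add: code_def)
    show "D = D'"
    proof (rule stratum_eq_if_reduced_rows_eq[OF p \<open>v \<le> l\<close> \<open>a \<le> k\<close> \<open>b \<le> k\<close> False D D'])
      show "D a i div ?P = D' a i div ?P" if "i \<in> {..k} - {a}" for i
        using fun_cong[OF quot_a, of i] that by (simp add: Ia_def)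
      show "D b i div ?P = D' b i div ?P" if "i \<in> {..k} - {a, b}" for i
        using fun_cong[OF quot_b, of i] that by (simp add: Ib_def)
    qed
  qed
  moreover have "card box = (p ^ (l - v)) ^ (2 * k - 1)"
  proof -
    have "finite Ia" "finite Ib"
      by (simp_all add: Ia_def Ib_def)
    moreover have "card Ia = k" "card Ib = k - 1"
      using \<open>a \<le> k\<close> \<open>b \<le> k\<close> False by (simp_all add: Ia_def Ib_def card_Diff_subset)
    moreover have "k + (k - 1) = 2 * k - 1"
      using \<open>a \<le> k\<close> \<open>b \<le> k\<close> False by linarith
    ultimately show ?thesis
      by (simp add: box_def card_cartesian_product card_PiE flip: power_add of_nat_power)
  qed
  moreover have "finite box"
    by (simp add: box_def Ia_def Ib_def finite_PiE)
  ultimately show ?thesis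
    by (metis card_image card_mono)
qed

lemma perp_gram_entry_dvd_imp_less:
  assumes p: "prime p" and "D \<in> perp_gram (p ^ l) k ` configs (p ^ l) k"
    and "D i j \<noteq> 0" "int p ^ v dvd D i j"
  shows "v < l"
proof -
  obtain x where "D = perp_gram (p ^ l) k x"
    using assms(2) by blast
  then have "0 \<le> D i j" "D i j < int p ^ l"
    using perp_gram_bounds[of "p ^ l" k x i j] p prime_gt_0_nat by auto
  then have "int p ^ v < int p ^ l"
    using assms(3,4) zdvd_imp_le[of "int p ^ v" "D i j"] by linarith
  then show ?thesis
    using prime_gt_1_nat[OF p] by (simp add: power_strict_increasing_iff)
qed

lemma perp_gram_in_stratum:
  assumes p: "prime p"
    and D: "D \<in> perp_gram (p ^ l) k ` configs (p ^ l) k" and "D \<noteq> (\<lambda>i j. 0)"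
    and dvd: "\<forall>i j. int p ^ u dvd D i j"
  shows "\<exists>a\<le>k. \<exists>b\<le>k. \<exists>v\<in>{u..<l}. D \<in> stratum p l k v a b"
proof -
  define V where "V = {v. \<forall>i j. int p ^ v dvd D i j}"
  obtain x where x: "D = perp_gram (p ^ l) k x"
    using D by blast
  obtain a0 b0 where "D a0 b0 \<noteq> 0"
    using \<open>D \<noteq> (\<lambda>i j. 0)\<close> by (meson ext)
  then have V_bound: "v < l" if "v \<in> V" for v
    using perp_gram_entry_dvd_imp_less[OF p D] that by (simp add: V_def)
  then have "V \<subseteq> {..<l}"
    by blast
  then have "finite V"
    by (rule finite_subset) simp
  moreover have "u \<in> V"
    using dvd by (simp add: V_def)
  ultimately have "Max V \<in> V" "u \<le> Max V"
    by (auto intro: Max_in Max_ge)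
  have "Suc (Max V) \<notin> V"
    using Max_ge[OF \<open>finite V\<close>, of "Suc (Max V)"] by auto
  then obtain a b where "\<not> int p ^ Suc (Max V) dvd D a b"
    by (auto simp: V_def)
  moreover from this have "a \<le> k \<and> b \<le> k"
    using perp_gram_outside[of a k b] x by force
  ultimately have "D \<in> stratum p l k (Max V) a b"
    using D \<open>Max V \<in> V\<close> by (simp add: stratum_def V_def)
  then show ?thesis
    using \<open>a \<le> k \<and> b \<le> k\<close> \<open>u \<le> Max V\<close> V_bound[OF \<open>Max V \<in> V\<close>]
    by (meson atLeastLessThan_iff)
qed

lemma card_perp_grams_le_sum:
  assumes p: "prime p"
    and S: "S \<subseteq> perp_gram (p ^ l) k ` configs (p ^ l) k"
    and dvd: "\<forall>D\<in>S. \<forall>i j. int p ^ u dvd D i j"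
  shows "card S \<le> 1 + (k + 1)^2 * (\<Sum>v\<in>{u..<l}. (p ^ (l - v)) ^ (2 * k - 1))"
proof -
  define I where "I = {..k} \<times> {..k} \<times> {u..<l}"
  define U where "U = (\<Union>(a, b, v)\<in>I. stratum p l k v a b)"
  have "S \<subseteq> insert (\<lambda>i j. 0) U"
  proof
    fix D assume "D \<in> S"
    show "D \<in> insert (\<lambda>i j. 0) U"
    proof (cases "D = (\<lambda>i j. 0)")
      case False
      moreover have "D \<in> perp_gram (p ^ l) k ` configs (p ^ l) k" "\<forall>i j. int p ^ u dvd D i j"
        using S dvd \<open>D \<in> S\<close> by blast+
      ultimately obtain a b v where "a \<le> k" "b \<le> k" "v \<in> {u..<l}" "D \<in> stratum p l k v a b"
        using perp_gram_in_stratum[OF p] by blast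
      then have "(a, b, v) \<in> I" "D \<in> stratum p l k v a b"
        by (simp_all add: I_def)
      then show ?thesis
        unfolding U_def by blast
    qed simp
  qed
  moreover have "finite U"
  proof (rule finite_subset)
    show "U \<subseteq> perp_gram (p ^ l) k ` configs (p ^ l) k"
      unfolding U_def stratum_def by blast
  qed (simp add: finite_configs)
  ultimately have "card S \<le> card (insert (\<lambda>i j. 0) U)"
    by (intro card_mono) simp_all
  also have "\<dots> \<le> 1 + card U"
    by (simp add: card_insert_if \<open>finite U\<close>)
  also have "card U \<le> (\<Sum>(a, b, v)\<in>I. card (stratum p l k v a b))"
    using card_UN_le[of I "\<lambda>(a, b, v). stratum p l k v a b"]
    unfolding U_def I_def by (simp add: prod.case_distrib)
  also have "\<dots> \<le> (\<Sum>(a, b, v)\<in>I. (p ^ (l - v)) ^ (2 * k - 1))"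
    by (rule sum_mono) (use card_stratum_le[OF p] in \<open>force simp: I_def\<close>)
  also have "\<dots> = (k + 1)^2 * (\<Sum>v\<in>{u..<l}. (p ^ (l - v)) ^ (2 * k - 1))"
    by (simp add: I_def sum.cartesian_product[symmetric] power2_eq_square algebra_simps)
  finally show ?thesis
    by simp
qed

lemma sum_power_diff_le_twice:
  fixes x :: nat
  assumes "x \<ge> 2"
  shows "(\<Sum>v\<in>{u..<l}. x ^ (l - v)) \<le> 2 * x ^ (l - u)"
proof -
  have geometric: "(\<Sum>j<n. x ^ (n - j)) \<le> 2 * x ^ n" for n
  proof (induction n)
    case (Suc n)
    have "(\<Sum>j<Suc n. x ^ (Suc n - j)) = x ^ Suc n + (\<Sum>j<n. x ^ (n - j))"
      by (subst sum.lessThan_Suc_shift) simp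
    also have "\<dots> \<le> x ^ Suc n + 2 * x ^ n"
      using Suc.IH by simp
    also have "\<dots> \<le> 2 * x ^ Suc n"
      using assms by simp
    finally show ?case .
  qed simp
  show ?thesis
  proof (cases "u \<le> l")
    case True
    then have "(\<Sum>v\<in>{u..<l}. x ^ (l - v)) = (\<Sum>j<l - u. x ^ (l - u - j))"
      by (intro sum.reindex_bij_witness[of _ "\<lambda>j. j + u" "\<lambda>v. v - u"]) auto
    then show ?thesis
      using geometric by presburger
  qed simp
qed

lemma card_perp_grams_le:
  assumes p: "prime p" and "k \<ge> 1"
    and S: "S \<subseteq> perp_gram (p ^ l) k ` configs (p ^ l) k"
    and dvd: "\<forall>D\<in>S. \<forall>i j. int p ^ u dvd D i j"
  shows "card S \<le> (1 + 2 * (k + 1)^2) * (p ^ (2 * k - 1)) ^ (l - u)"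
proof -
  let ?X = "p ^ (2 * k - 1)"
  have "p \<le> ?X"
    using \<open>k \<ge> 1\<close> prime_gt_0_nat[OF p] by (simp add: self_le_power)
  then have "2 \<le> ?X"
    using prime_ge_2_nat[OF p] by linarith
  have "card S \<le> 1 + (k + 1)^2 * (\<Sum>v\<in>{u..<l}. ?X ^ (l - v))"
    using card_perp_grams_le_sum[OF p S dvd] by (simp add: mult.commute flip: power_mult)
  also have "\<dots> \<le> 1 + (k + 1)^2 * (2 * ?X ^ (l - u))"
    using sum_power_diff_le_twice[OF \<open>2 \<le> ?X\<close>] by simp
  also have "\<dots> \<le> (1 + 2 * (k + 1)^2) * ?X ^ (l - u)"
    using \<open>2 \<le> ?X\<close> by (simp add: algebra_simps)
  finally show ?thesis .
qed

lemma not_unit_mod_prime_power_imp_dvd: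
  assumes p: "prime p" and "\<not> is_unit_mod (p ^ l) d"
  shows "int p dvd d"
proof (rule ccontr)
  assume "\<not> int p dvd d"
  then have "coprime (int p) d"
    using p by (intro prime_imp_coprime) simp_all
  then have "coprime d (int p ^ l)"
    by (simp add: ac_simps)
  then obtain y where "[d * y = 1] (mod int p ^ l)"
    using cong_solve_coprime_int by blast
  with assms(2) show False
    by (auto simp: is_unit_mod_def)
qed

lemma prime_power_le_twice_totient:
  assumes p: "prime p" and "l \<ge> 1"
  shows "p ^ l \<le> 2 * totient (p ^ l)"
proof -
  have "p ^ l = p ^ (l - 1) * p"
    using \<open>l \<ge> 1\<close> by (simp flip: power_Suc2)
  also have "\<dots> \<le> p ^ (l - 1) * (2 * (p - 1))"
    using prime_ge_2_nat[OF p] by (intro mult_le_mono2) linarith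
  also have "\<dots> = 2 * totient (p ^ l)"
    using totient_prime_power[OF p] \<open>l \<ge> 1\<close> by simp
  finally show ?thesis .
qed

definition normal_config :: "nat \<Rightarrow> int \<Rightarrow> (nat \<Rightarrow> int) \<Rightarrow> (nat \<Rightarrow> int) \<Rightarrow> nat \<Rightarrow> int \<times> int" where
  "normal_config k u a b i =
     (if i = 0 then (1, 0) else if i = 1 then (0, u) else if i \<le> k then (a i, b i) else (0, 0))"

lemma perp_gram_normal_config:
  assumes "k \<ge> 1"
  shows "perp_gram m k (normal_config k u a b) 0 1 = u mod int m"
    and "2 \<le> i \<Longrightarrow> i \<le> k \<Longrightarrow> perp_gram m k (normal_config k u a b) i 0 = - b i mod int m"
    and "2 \<le> i \<Longrightarrow> i \<le> k \<Longrightarrow> perp_gram m k (normal_config k u a b) i 1 = a i * u mod int m"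
  using assms by (simp_all add: perp_gram_def perp_dot_def normal_config_def)

lemma normal_config_good:
  assumes "m > 1" "k \<ge> 1" "u \<in> {0..<int m}" "coprime u (int m)"
    and "a \<in> {2..k} \<rightarrow>\<^sub>E {0..<int m}" "b \<in> {2..k} \<rightarrow>\<^sub>E {0..<int m}"
  shows "normal_config k u a b \<in> configs m k \<and> good_config m k (normal_config k u a b)"
proof
  show "normal_config k u a b \<in> configs m k"
    using assms by (auto simp: configs_def residues_set_def normal_config_def PiE_iff)
  obtain y where "[u * y = 1] (mod int m)"
    using cong_solve_coprime_int \<open>coprime u (int m)\<close> by blast
  then have "is_unit_mod m (perp_gram m k (normal_config k u a b) 0 1)"
    unfolding perp_gram_normal_config(1)[OF \<open>k \<ge> 1\<close>] is_unit_mod_def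
    by (metis cong_def mod_mult_left_eq)
  then show "good_config m k (normal_config k u a b)"
    unfolding good_config_iff_perp_gram using \<open>k \<ge> 1\<close> by blast
qed

lemma inj_on_normal_config_perp_gram:
  assumes "k \<ge> 1"
  shows "inj_on (\<lambda>(u, a, b). perp_gram m k (normal_config k u a b))
           ({u \<in> {0..<int m}. coprime u (int m)}
              \<times> ({2..k} \<rightarrow>\<^sub>E {0..<int m}) \<times> ({2..k} \<rightarrow>\<^sub>E {0..<int m}))"
proof (rule inj_onI)
  fix z z'
  assume z: "z \<in> {u \<in> {0..<int m}. coprime u (int m)}
              \<times> ({2..k} \<rightarrow>\<^sub>E {0..<int m}) \<times> ({2..k} \<rightarrow>\<^sub>E {0..<int m})"
    and z': "z' \<in> {u \<in> {0..<int m}. coprime u (int m)}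
              \<times> ({2..k} \<rightarrow>\<^sub>E {0..<int m}) \<times> ({2..k} \<rightarrow>\<^sub>E {0..<int m})"
    and eq_z: "(\<lambda>(u, a, b). perp_gram m k (normal_config k u a b)) z
               = (\<lambda>(u, a, b). perp_gram m k (normal_config k u a b)) z'"
  obtain u a b u' a' b' where zs: "z = (u, a, b)" "z' = (u', a', b')"
    using prod_cases3 by metis
  have u: "u \<in> {0..<int m}" "coprime u (int m)" and u': "u' \<in> {0..<int m}"
    and a: "a \<in> {2..k} \<rightarrow>\<^sub>E {0..<int m}" "a' \<in> {2..k} \<rightarrow>\<^sub>E {0..<int m}"
    and b: "b \<in> {2..k} \<rightarrow>\<^sub>E {0..<int m}" "b' \<in> {2..k} \<rightarrow>\<^sub>E {0..<int m}"
    and eq: "perp_gram m k (normal_config k u a b) = perp_gram m k (normal_config k u' a' b')"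
    using z z' eq_z unfolding zs by auto
  note gram = perp_gram_normal_config[OF \<open>k \<ge> 1\<close>, where m = m]
  have "[u = u'] (mod int m)"
    using gram(1)[of u a b] gram(1)[of u' a' b'] eq by (simp add: cong_def)
  then have "u = u'"
    using cong_less_imp_eq_int[of u "int m" u'] u u' by simp
  have "b i = b' i" if "i \<in> {2..k}" for i
  proof -
    have "[- b i = - b' i] (mod int m)"
      using gram(2)[of i u a b] gram(2)[of i u' a' b'] eq that by (simp add: cong_def)
    then show ?thesis
      using PiE_mem[OF b(1) that] PiE_mem[OF b(2) that] cong_less_imp_eq_int[of "b i" "int m" "b' i"]
      by (simp add: cong_minus_minus_iff)
  qed
  then have "b = b'"
    using b by (intro PiE_ext) auto
  have "a i = a' i" if "i \<in> {2..k}" for i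
  proof -
    have "[a i * u = a' i * u] (mod int m)"
      using gram(3)[of i u a b] gram(3)[of i u' a' b'] eq that \<open>u = u'\<close> by (simp add: cong_def)
    then have "[a i = a' i] (mod int m)"
      using u(2) cong_mult_rcancel by blast
    then show ?thesis
      using PiE_mem[OF a(1) that] PiE_mem[OF a(2) that] cong_less_imp_eq_int[of "a i" "int m" "a' i"]
      by simp
  qed
  then have "a = a'"
    using a by (intro PiE_ext) auto
  show "z = z'"
    using zs \<open>u = u'\<close> \<open>a = a'\<close> \<open>b = b'\<close> by simp
qed

lemma image_int_totatives:
  assumes "m > 1"
  shows "int ` totatives m = {u \<in> {0..<int m}. coprime u (int m)}"
proof (intro Set.set_eqI iffI)
  fix u assume "u \<in> int ` totatives m"
  then obtain n where n: "u = int n" "0 < n" "n \<le> m" "coprime n m"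
    by (auto simp: in_totatives_iff)
  moreover have "n \<noteq> m"
    using \<open>coprime n m\<close> \<open>m > 1\<close> by auto
  ultimately show "u \<in> {u \<in> {0..<int m}. coprime u (int m)}"
    by simp
next
  fix u assume u: "u \<in> {u \<in> {0..<int m}. coprime u (int m)}"
  then have "u \<noteq> 0"
    using \<open>m > 1\<close> by auto
  with u have "nat u \<in> totatives m"
    by (auto simp: in_totatives_iff coprime_int_iff[symmetric])
  with u show "u \<in> int ` totatives m"
    by (intro image_eqI[of _ _ "nat u"]) auto
qed

lemma card_good_perp_grams_ge:
  assumes "m > 1" "k \<ge> 1"
  shows "totient m * m ^ (2 * (k - 1)) \<le> card (perp_gram m k ` {x \<in> configs m k. good_config m k x})"
proof -
  let ?U = "{u \<in> {0..<int m}. coprime u (int m)}" and ?A = "{2..k} \<rightarrow>\<^sub>E {0..<int m}"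
  let ?code = "\<lambda>(u, a, b). perp_gram m k (normal_config k u a b)"
  have "card ?U = totient m"
    unfolding totient_def image_int_totatives[OF \<open>m > 1\<close>, symmetric] by (simp add: card_image)
  moreover have "card ?A = m ^ (k - 1)"
    by (simp add: card_PiE)
  ultimately have "totient m * m ^ (2 * (k - 1)) = card (?U \<times> ?A \<times> ?A)"
    by (simp add: card_cartesian_product mult_2 power_add)
  also have "\<dots> = card (?code ` (?U \<times> ?A \<times> ?A))"
    by (rule card_image[OF inj_on_normal_config_perp_gram[OF \<open>k \<ge> 1\<close>], symmetric])
  also have "\<dots> \<le> card (perp_gram m k ` {x \<in> configs m k. good_config m k x})"
  proof (rule card_mono)
    show "finite (perp_gram m k ` {x \<in> configs m k. good_config m k x})"
      using finite_configs by simp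
    show "?code ` (?U \<times> ?A \<times> ?A) \<subseteq> perp_gram m k ` {x \<in> configs m k. good_config m k x}"
    proof (rule image_subsetI)
      fix z assume "z \<in> ?U \<times> ?A \<times> ?A"
      then obtain u a b where "z = (u, a, b)" "u \<in> {0..<int m}" "coprime u (int m)" "a \<in> ?A" "b \<in> ?A"
        by blast
      then show "?code z \<in> perp_gram m k ` {x \<in> configs m k. good_config m k x}"
        using normal_config_good[OF assms] by simp
    qed
  qed
  finally show ?thesis .
qed

lemma card_config_classes_eq: "card (config_classes m k) = card (perp_gram m k ` configs m k)"
  using card_classes_eq_card_perp_grams[of m k "\<lambda>_. True"] by simp

lemma card_good_classes_eq:
  "card (good_classes m k) = card (perp_gram m k ` {x \<in> configs m k. good_config m k x})"
  unfolding good_classes_def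
  by (rule card_classes_eq_card_perp_grams) (simp add: good_config_iff_perp_gram)

lemma card_bad_classes_eq:
  "card (bad_classes m k) = card (perp_gram m k ` {x \<in> configs m k. \<not> good_config m k x})"
  unfolding bad_classes_def
  by (rule card_classes_eq_card_perp_grams) (simp add: good_config_iff_perp_gram)

lemma card_good_classes_le: "card (good_classes m k) \<le> card (config_classes m k)"
proof (rule card_mono)
  show "finite (config_classes m k)"
    unfolding config_classes_def
    by (rule finite_quotient[OF finite_configs]) (auto simp: config_equiv_def)
qed (auto simp: good_classes_def)

lemma card_config_classes_le:
  assumes "prime p" "k \<ge> 1"
  shows "card (config_classes (p ^ l) k) \<le> (1 + 2 * (k + 1)^2) * (p ^ l) ^ (2 * k - 1)"
  using card_perp_grams_le[OF assms, where S = "perp_gram (p ^ l) k ` configs (p ^ l) k" and u = 0]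
  by (simp add: card_config_classes_eq mult.commute flip: power_mult)

lemma card_bad_classes_le:
  assumes p: "prime p" and "l \<ge> 1" "k \<ge> 1"
  shows "p * card (bad_classes (p ^ l) k) \<le> (1 + 2 * (k + 1)^2) * (p ^ l) ^ (2 * k - 1)"
proof -
  let ?X = "p ^ (2 * k - 1)" and ?K = "1 + 2 * (k + 1)^2"
  let ?B = "perp_gram (p ^ l) k ` {x \<in> configs (p ^ l) k. \<not> good_config (p ^ l) k x}"
  have "int p dvd D i j" if "D \<in> ?B" for D i j
  proof -
    obtain x where x: "D = perp_gram (p ^ l) k x" "\<not> good_config (p ^ l) k x"
      using \<open>D \<in> ?B\<close> by blast
    show ?thesis
    proof (cases "i \<le> k \<and> j \<le> k")
      case True
      then have "\<not> is_unit_mod (p ^ l) (D i j)"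
        using x unfolding good_config_iff_perp_gram by blast
      then show ?thesis
        by (rule not_unit_mod_prime_power_imp_dvd[OF p])
    qed (simp add: x perp_gram_outside)
  qed
  then have card_B: "card ?B \<le> ?K * ?X ^ (l - 1)"
    by (intro card_perp_grams_le[OF p \<open>k \<ge> 1\<close>]) auto
  have "p \<le> ?X"
    using \<open>k \<ge> 1\<close> prime_gt_0_nat[OF p] by (simp add: self_le_power)
  then have "p * ?X ^ (l - 1) \<le> ?X * ?X ^ (l - 1)"
    by (rule mult_le_mono1)
  also have "\<dots> = ?X ^ l"
    using \<open>l \<ge> 1\<close> by (cases l) simp_all
  also have "\<dots> = (p ^ l) ^ (2 * k - 1)"
    by (metis power_mult mult.commute)
  finally have X_bound: "p * ?X ^ (l - 1) \<le> (p ^ l) ^ (2 * k - 1)" .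
  have "p * card ?B \<le> p * (?K * ?X ^ (l - 1))"
    using card_B by (rule mult_le_mono2)
  also have "\<dots> = ?K * (p * ?X ^ (l - 1))"
    by (simp only: mult.left_commute)
  also have "\<dots> \<le> ?K * (p ^ l) ^ (2 * k - 1)"
    using X_bound by (rule mult_le_mono2)
  finally show ?thesis
    by (simp only: card_bad_classes_eq)
qed

lemma card_good_classes_ge:
  assumes p: "prime p" and "l \<ge> 1" "k \<ge> 1"
  shows "(p ^ l) ^ (2 * k - 1) \<le> 2 * card (good_classes (p ^ l) k)"
proof -
  have "p ^ l > 1"
    using prime_gt_1_nat[OF p] \<open>l \<ge> 1\<close> by (intro one_less_power) auto
  have "(p ^ l) ^ (2 * k - 1) = p ^ l * (p ^ l) ^ (2 * (k - 1))"
  proof -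
    have "2 * k - 1 = Suc (2 * (k - 1))"
      using \<open>k \<ge> 1\<close> by simp
    then show ?thesis
      by (simp only: power_Suc)
  qed
  also have "\<dots> \<le> 2 * totient (p ^ l) * (p ^ l) ^ (2 * (k - 1))"
    using prime_power_le_twice_totient[OF p \<open>l \<ge> 1\<close>] by simp
  also have "\<dots> \<le> 2 * card (good_classes (p ^ l) k)"
    using card_good_perp_grams_ge[OF \<open>p ^ l > 1\<close> \<open>k \<ge> 1\<close>] by (simp add: card_good_classes_eq)
  finally show ?thesis .
qed

lemma class_count_bounds:
  fixes p l k :: nat
  defines "K \<equiv> real (1 + 2 * (k + 1)^2)" and "T \<equiv> real (p ^ l) ^ (2 * k - 1)"
  assumes "prime p" "l \<ge> 1" "k \<ge> 1"
  shows "real (card (config_classes (p ^ l) k)) \<le> K * T \<and> T \<le> K * real (card (config_classes (p ^ l) k))"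
    and "real (card (good_classes (p ^ l) k)) \<le> K * T \<and> T \<le> K * real (card (good_classes (p ^ l) k))"
    and "real p * real (card (bad_classes (p ^ l) k)) \<le> K * T"
proof -
  let ?A = "real (card (config_classes (p ^ l) k))" and ?G = "real (card (good_classes (p ^ l) k))"
  have "?A \<le> K * T" "T \<le> 2 * ?G" "?G \<le> ?A"
    "real p * real (card (bad_classes (p ^ l) k)) \<le> K * T"
    using of_nat_mono[OF card_config_classes_le[OF \<open>prime p\<close> \<open>k \<ge> 1\<close>, of l]]
      of_nat_mono[OF card_good_classes_ge[OF assms(3-5)]]
      of_nat_mono[OF card_good_classes_le[of "p ^ l" k]]
      of_nat_mono[OF card_bad_classes_le[OF assms(3-5)]]
    unfolding K_def T_def by (simp_all only: of_nat_mult of_nat_power of_nat_numeral)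
  moreover have "(2::nat) \<le> 1 + 2 * (k + 1)^2"
    using power_increasing[of 0 2 "k + 1"] by simp
  then have "2 \<le> K"
    unfolding K_def by (metis of_nat_le_iff of_nat_numeral)
  then have "2 * ?A \<le> K * ?A" "2 * ?G \<le> K * ?G"
    by (simp_all add: mult_right_mono)
  ultimately show "?A \<le> K * T \<and> T \<le> K * ?A" "?G \<le> K * T \<and> T \<le> K * ?G"
    "real p * real (card (bad_classes (p ^ l) k)) \<le> K * T"
    by linarith+
qed

theorem theorem6p1:
  fixes k :: nat
  assumes "k \<ge> 1"
  shows "(\<exists>C>0. \<forall>(p::nat) l. prime p \<and> odd p \<and> l \<ge> 1 \<longrightarrow>
            real (card (config_classes (p ^ l) k)) \<le> C * real (p ^ l) ^ (2 * k - 1) \<and>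
            real (p ^ l) ^ (2 * k - 1) \<le> C * real (card (config_classes (p ^ l) k)))
       \<and> (\<exists>C>0. \<forall>(p::nat) l. prime p \<and> odd p \<and> l \<ge> 1 \<longrightarrow>
            real (card (good_classes (p ^ l) k)) \<le> C * real (p ^ l) ^ (2 * k - 1) \<and>
            real (p ^ l) ^ (2 * k - 1) \<le> C * real (card (good_classes (p ^ l) k)))
       \<and> (\<forall>\<epsilon>>0. \<exists>P. \<forall>(p::nat) l. prime p \<and> odd p \<and> p \<ge> P \<and> l \<ge> 1 \<longrightarrow>
            real (card (bad_classes (p ^ l) k)) \<le> \<epsilon> * real (p ^ l) ^ (2 * k - 1))"
proof -
  define K where "K = real (1 + 2 * (k + 1)^2)"
  have "K > 0"
    unfolding K_def by (simp only: of_nat_0_less_iff)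
  have "\<exists>P. \<forall>p l. prime p \<and> odd p \<and> p \<ge> P \<and> l \<ge> 1 \<longrightarrow>
          real (card (bad_classes (p ^ l) k)) \<le> \<epsilon> * real (p ^ l) ^ (2 * k - 1)"
    if "\<epsilon> > 0" for \<epsilon>
  proof (intro exI[of _ "nat \<lceil>K / \<epsilon>\<rceil>"] allI impI, elim conjE)
    fix p l :: nat assume "prime p" "nat \<lceil>K / \<epsilon>\<rceil> \<le> p" "l \<ge> 1"
    then have "K \<le> \<epsilon> * real p"
      using \<open>\<epsilon> > 0\<close> by (simp add: pos_divide_le_eq mult.commute)
    then have "K * real (p ^ l) ^ (2 * k - 1) \<le> real p * (\<epsilon> * real (p ^ l) ^ (2 * k - 1))"
      by (metis mult.assoc mult.commute mult_right_mono zero_le_power of_nat_0_le_iff)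
    then show "real (card (bad_classes (p ^ l) k)) \<le> \<epsilon> * real (p ^ l) ^ (2 * k - 1)"
      using class_count_bounds(3)[OF \<open>prime p\<close> \<open>l \<ge> 1\<close> assms, folded K_def]
        prime_gt_0_nat[OF \<open>prime p\<close>]
      by (smt (verit) mult_le_cancel_left_pos of_nat_0_less_iff)
  qed
  then show ?thesis
    using class_count_bounds(1,2)[OF _ _ assms, folded K_def] \<open>K > 0\<close>
    by (auto intro!: exI[of _ K])
qed

end
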